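(* Let $(X,\|\cdot\|_X)$ be a Banach space, let $\mathcal{K}\subset X$ be compact and let $n\in\mathbb{N}$. Then the function $\gamma\mapsto d_n^\gamma(\mathcal{K})_X$ is continuous on $[0,\infty)$.
   Context: For $k\ge1$ and a norm $\|\cdot\|_{Y_k}$ on $\mathbb{R}^k$ let $B_{Y_k}=\{y\in\mathbb{R}^k:\|y\|_{Y_k}\le1\}$. For $\mathcal{K}\subset X$ and $\gamma\ge0$, the fixed Lipschitz width is $d^\gamma(\mathcal{K},Y_k)_X=\inf_{\Phi}\sup_{f\in\mathcal{K}}\inf_{y\in B_{Y_k}}\|f-\Phi(y)\|_X$, the infimum being over all maps $\Phi:B_{Y_k}\to X$ with $\|\Phi(y)-\Phi(y')\|_X\le\gamma\|y-y'\|_{Y_k}$ for all $y,y'\in B_{Y_k}$. The Lipschitz width is $d_n^\gamma(\mathcal{K})_X=\inf_{1\le k\le n}\inf_{\|\cdot\|_{Y_k}}d^\gamma(\mathcal{K},Y_k)_X$, where the inner infimum is over all norms on $\mathbb{R}^k$. *)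

theory Defs
  imports "HOL-Analysis.Analysis"
begin

text \<open>R^k is modelled as the functions nat => real vanishing outside {0..<k}.\<close>
definition Rk :: "nat \<Rightarrow> (nat \<Rightarrow> real) set" where
  "Rk k = {y. \<forall>i\<ge>k. y i = 0}"

text \<open>N is a norm on R^k (only its values on Rk k matter).\<close>
definition is_norm_on :: "nat \<Rightarrow> ((nat \<Rightarrow> real) \<Rightarrow> real) \<Rightarrow> bool" where
  "is_norm_on k N \<longleftrightarrow>
     (\<forall>x\<in>Rk k. 0 \<le> N x \<and> (N x = 0 \<longleftrightarrow> x = (\<lambda>_. 0))) \<and>
     (\<forall>x\<in>Rk k. \<forall>c::real. N (\<lambda>i. c * x i) = \<bar>c\<bar> * N x) \<and>
     (\<forall>x\<in>Rk k. \<forall>y\<in>Rk k. N (\<lambda>i. x i + y i) \<le> N x + N y)"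

definition unit_ball :: "nat \<Rightarrow> ((nat \<Rightarrow> real) \<Rightarrow> real) \<Rightarrow> (nat \<Rightarrow> real) set" where
  "unit_ball k N = {y \<in> Rk k. N y \<le> 1}"

definition lip_maps :: "nat \<Rightarrow> ((nat \<Rightarrow> real) \<Rightarrow> real) \<Rightarrow> real \<Rightarrow> ((nat \<Rightarrow> real) \<Rightarrow> 'a::real_normed_vector) set" where
  "lip_maps k N \<gamma> = {\<Phi>. \<forall>y\<in>unit_ball k N. \<forall>y'\<in>unit_ball k N.
       norm (\<Phi> y - \<Phi> y') \<le> \<gamma> * N (\<lambda>i. y i - y' i)}"

definition fixed_lip_width :: "'a::real_normed_vector set \<Rightarrow> nat \<Rightarrow> ((nat \<Rightarrow> real) \<Rightarrow> real) \<Rightarrow> real \<Rightarrow> real" where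
  "fixed_lip_width K k N \<gamma> =
     (INF \<Phi>\<in>lip_maps k N \<gamma>. SUP f\<in>K. INF y\<in>unit_ball k N. norm (f - \<Phi> y))"

definition lip_width :: "nat \<Rightarrow> 'a::real_normed_vector set \<Rightarrow> real \<Rightarrow> real" where
  "lip_width n K \<gamma> = (INF k\<in>{1..n}. INF N\<in>{N. is_norm_on k N}. fixed_lip_width K k N \<gamma>)"

end

theory Submission
  imports Defs
begin

text \<open>If \<Phi> is \<gamma>'-Lipschitz on the unit ball of a fixed norm and t = \<gamma>/\<gamma>', then
  y \<mapsto> \<Phi>(t y) is \<gamma>-Lipschitz and stays within \<gamma>' (1 - t) = \<gamma>' - \<gamma> of \<Phi> on the ball.
  Hence each fixed Lipschitz width is nonincreasing in \<gamma> and grows by at most \<gamma>' - \<gamma>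
  when \<gamma>' is lowered to \<gamma>, so it is 1-Lipschitz in \<gamma>. Pointwise infima of 1-Lipschitz
  functions that are bounded below are again 1-Lipschitz, so the Lipschitz width is
  1-Lipschitz on [0, \<infinity>), hence continuous.\<close>

lemma Rk_diff: "x \<in> Rk k \<Longrightarrow> y \<in> Rk k \<Longrightarrow> (\<lambda>i. x i - y i) \<in> Rk k"
  unfolding Rk_def by auto

lemma Rk_scale: "x \<in> Rk k \<Longrightarrow> (\<lambda>i. c * x i) \<in> Rk k"
  unfolding Rk_def by auto

lemma is_norm_on_nonneg: "is_norm_on k N \<Longrightarrow> x \<in> Rk k \<Longrightarrow> 0 \<le> N x"
  unfolding is_norm_on_def by auto

lemma is_norm_on_scale: "is_norm_on k N \<Longrightarrow> x \<in> Rk k \<Longrightarrow> N (\<lambda>i. c * x i) = \<bar>c\<bar> * N x"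
  unfolding is_norm_on_def by auto

lemma is_norm_on_zero: "is_norm_on k N \<Longrightarrow> N (\<lambda>_. 0) = 0"
  unfolding is_norm_on_def Rk_def by auto

lemma ex_is_norm_on: "\<exists>N. is_norm_on k N"
proof
  show "is_norm_on k (\<lambda>x. \<Sum>i<k. \<bar>x i\<bar>)"
    unfolding is_norm_on_def
  proof (intro conjI ballI allI)
    fix x c assume x: "x \<in> Rk k"
    show "0 \<le> (\<Sum>i<k. \<bar>x i\<bar>)" by (simp add: sum_nonneg)
    show "(\<Sum>i<k. \<bar>x i\<bar>) = 0 \<longleftrightarrow> x = (\<lambda>_. 0)"
      using x by (auto simp: Rk_def sum_nonneg_eq_0_iff fun_eq_iff) (metis lessThan_iff not_less)
    show "(\<Sum>i<k. \<bar>c * x i\<bar>) = \<bar>c\<bar> * (\<Sum>i<k. \<bar>x i\<bar>)"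
      by (simp add: abs_mult sum_distrib_left)
  next
    fix x y :: "nat \<Rightarrow> real"
    show "(\<Sum>i<k. \<bar>x i + y i\<bar>) \<le> (\<Sum>i<k. \<bar>x i\<bar>) + (\<Sum>i<k. \<bar>y i\<bar>)"
      by (simp add: sum.distrib[symmetric] sum_mono abs_triangle_ineq)
  qed
qed

lemma unit_ball_not_empty: "is_norm_on k N \<Longrightarrow> unit_ball k N \<noteq> {}"
  using is_norm_on_zero[of k N] by (auto simp: unit_ball_def Rk_def)

lemma scale_in_unit_ball:
  assumes N: "is_norm_on k N" and y: "y \<in> unit_ball k N" and c: "\<bar>c\<bar> \<le> 1"
  shows "(\<lambda>i. c * y i) \<in> unit_ball k N"
proof -
  have "y \<in> Rk k" "N y \<le> 1" using y by (auto simp: unit_ball_def)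
  moreover have "\<bar>c\<bar> * N y \<le> 1"
    using calculation c is_norm_on_nonneg[OF N] by (simp add: mult_le_one)
  ultimately show ?thesis
    by (simp add: unit_ball_def Rk_scale is_norm_on_scale[OF N])
qed

lemma const_in_lip_maps: "is_norm_on k N \<Longrightarrow> 0 \<le> \<gamma> \<Longrightarrow> (\<lambda>_. c) \<in> lip_maps k N \<gamma>"
  using is_norm_on_nonneg[OF _ Rk_diff] by (fastforce simp: lip_maps_def unit_ball_def)

lemma lip_maps_mono:
  assumes N: "is_norm_on k N" and "\<gamma> \<le> \<gamma>'"
  shows "lip_maps k N \<gamma> \<subseteq> lip_maps k N \<gamma>'"
proof
  fix \<Phi> :: "(nat \<Rightarrow> real) \<Rightarrow> 'a" assume \<Phi>: "\<Phi> \<in> lip_maps k N \<gamma>"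
  have "norm (\<Phi> y - \<Phi> y') \<le> \<gamma>' * N (\<lambda>i. y i - y' i)"
    if "y \<in> unit_ball k N" "y' \<in> unit_ball k N" for y y'
  proof -
    have "0 \<le> N (\<lambda>i. y i - y' i)"
      using that by (auto simp: unit_ball_def intro: is_norm_on_nonneg[OF N] Rk_diff)
    with \<open>\<gamma> \<le> \<gamma>'\<close> have "\<gamma> * N (\<lambda>i. y i - y' i) \<le> \<gamma>' * N (\<lambda>i. y i - y' i)"
      by (rule mult_right_mono)
    with \<Phi> that show ?thesis by (force simp: lip_maps_def)
  qed
  then show "\<Phi> \<in> lip_maps k N \<gamma>'" by (simp add: lip_maps_def)
qed

lemma lip_maps_rescale:
  assumes N: "is_norm_on k N" and \<Phi>: "\<Phi> \<in> lip_maps k N \<gamma>" and t: "\<bar>t\<bar> \<le> 1"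
  shows "(\<lambda>y. \<Phi> (\<lambda>i. t * y i)) \<in> lip_maps k N (\<bar>t\<bar> * \<gamma>)"
  unfolding lip_maps_def
proof (intro CollectI ballI)
  fix y y' assume y: "y \<in> unit_ball k N" "y' \<in> unit_ball k N"
  have "norm (\<Phi> (\<lambda>i. t * y i) - \<Phi> (\<lambda>i. t * y' i)) \<le> \<gamma> * N (\<lambda>i. t * y i - t * y' i)"
    using \<Phi> scale_in_unit_ball[OF N _ t] y by (simp add: lip_maps_def)
  also have "(\<lambda>i. t * y i - t * y' i) = (\<lambda>i. t * (y i - y' i))"
    by (simp add: right_diff_distrib)
  also have "N \<dots> = \<bar>t\<bar> * N (\<lambda>i. y i - y' i)"
    using y by (simp add: unit_ball_def is_norm_on_scale[OF N] Rk_diff)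
  finally show "norm (\<Phi> (\<lambda>i. t * y i) - \<Phi> (\<lambda>i. t * y' i)) \<le> \<bar>t\<bar> * \<gamma> * N (\<lambda>i. y i - y' i)"
    by (simp add: mult_ac)
qed

definition approx_error :: "'a::real_normed_vector set \<Rightarrow> 'b set \<Rightarrow> ('b \<Rightarrow> 'a) \<Rightarrow> real" where
  "approx_error K B \<Phi> = (SUP f\<in>K. INF y\<in>B. norm (f - \<Phi> y))"

lemma fixed_lip_width_eq_INF_approx_error:
  "fixed_lip_width K k N \<gamma> = (INF \<Phi>\<in>lip_maps k N \<gamma>. approx_error K (unit_ball k N) \<Phi>)"
  unfolding fixed_lip_width_def approx_error_def ..

lemma bdd_above_approx_error:
  fixes \<Phi> :: "'b \<Rightarrow> 'a::real_normed_vector"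
  assumes "bounded K" "z \<in> B"
  shows "bdd_above ((\<lambda>f. INF y\<in>B. norm (f - \<Phi> y)) ` K)"
proof -
  obtain M where M: "\<And>f. f \<in> K \<Longrightarrow> norm f \<le> M" using assms(1) bounded_iff by blast
  have "(INF y\<in>B. norm (f - \<Phi> y)) \<le> M + norm (\<Phi> z)" if "f \<in> K" for f
  proof -
    have "(INF y\<in>B. norm (f - \<Phi> y)) \<le> norm (f - \<Phi> z)"
      by (rule cINF_lower[OF bdd_belowI[of _ 0] assms(2)]) auto
    also have "\<dots> \<le> norm f + norm (\<Phi> z)" by (rule norm_triangle_ineq4)
    finally show ?thesis using M[OF that] by simp
  qed
  then show ?thesis by (intro bdd_aboveI) auto
qed

lemma approx_error_nonneg:
  assumes "bounded K" "K \<noteq> {}" "B \<noteq> {}"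
  shows "0 \<le> approx_error K B \<Phi>"
proof -
  obtain f z where "f \<in> K" "z \<in> B" using assms(2,3) by blast
  have "0 \<le> (INF y\<in>B. norm (f - \<Phi> y))"
    using assms(3) by (intro cINF_greatest) auto
  also have "\<dots> \<le> approx_error K B \<Phi>"
    unfolding approx_error_def
    by (rule cSUP_upper[OF \<open>f \<in> K\<close> bdd_above_approx_error[OF assms(1) \<open>z \<in> B\<close>]])
  finally show ?thesis .
qed

lemma approx_error_le:
  assumes K: "bounded K" "K \<noteq> {}" and "B \<noteq> {}"
    and close: "\<And>y. y \<in> B \<Longrightarrow> \<exists>y'\<in>B. norm (\<Phi>' y' - \<Phi> y) \<le> \<delta>"
  shows "approx_error K B \<Phi>' \<le> approx_error K B \<Phi> + \<delta>"
  unfolding approx_error_def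
proof (rule cSUP_least[OF \<open>K \<noteq> {}\<close>])
  fix f assume f: "f \<in> K"
  obtain z where z: "z \<in> B" using \<open>B \<noteq> {}\<close> by blast
  have "(INF y\<in>B. norm (f - \<Phi>' y)) - \<delta> \<le> (INF y\<in>B. norm (f - \<Phi> y))"
  proof (rule cINF_greatest[OF \<open>B \<noteq> {}\<close>])
    fix y assume "y \<in> B"
    then obtain y' where y': "y' \<in> B" "norm (\<Phi>' y' - \<Phi> y) \<le> \<delta>" using close by blast
    have "(INF y\<in>B. norm (f - \<Phi>' y)) \<le> norm (f - \<Phi>' y')"
      by (rule cINF_lower[OF bdd_belowI[of _ 0] y'(1)]) auto
    also have "\<dots> \<le> norm (f - \<Phi> y) + norm (\<Phi>' y' - \<Phi> y)"
      using norm_triangle_sub[of "f - \<Phi>' y'" "f - \<Phi> y"] by (simp add: norm_minus_commute)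
    finally show "(INF y\<in>B. norm (f - \<Phi>' y)) - \<delta> \<le> norm (f - \<Phi> y)" using y'(2) by simp
  qed
  also have "\<dots> \<le> (SUP f\<in>K. INF y\<in>B. norm (f - \<Phi> y))"
    by (rule cSUP_upper[OF f bdd_above_approx_error[OF K(1) z]])
  finally show "(INF y\<in>B. norm (f - \<Phi>' y)) \<le> (SUP f\<in>K. INF y\<in>B. norm (f - \<Phi> y)) + \<delta>"
    by simp
qed

lemma fixed_lip_width_nonneg:
  assumes "bounded K" "K \<noteq> {}" "is_norm_on k N" "0 \<le> \<gamma>"
  shows "0 \<le> fixed_lip_width K k N \<gamma>"
  unfolding fixed_lip_width_eq_INF_approx_error
  using const_in_lip_maps[OF assms(3,4)] unit_ball_not_empty[OF assms(3)]
  by (intro cINF_greatest approx_error_nonneg[OF assms(1,2)]) auto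

lemma bdd_below_approx_error:
  assumes "bounded K" "K \<noteq> {}" "is_norm_on k N"
  shows "bdd_below (approx_error K (unit_ball k N) ` lip_maps k N \<gamma>)"
  using approx_error_nonneg[OF assms(1,2) unit_ball_not_empty[OF assms(3)]]
  by (intro bdd_belowI[of _ 0]) auto

lemma fixed_lip_width_antimono:
  assumes "bounded K" "K \<noteq> {}" "is_norm_on k N" "0 \<le> \<gamma>" "\<gamma> \<le> \<gamma>'"
  shows "fixed_lip_width K k N \<gamma>' \<le> fixed_lip_width K k N \<gamma>"
  unfolding fixed_lip_width_eq_INF_approx_error
  using const_in_lip_maps[OF assms(3,4)] lip_maps_mono[OF assms(3,5)]
  by (intro cINF_superset_mono bdd_below_approx_error[OF assms(1-3)]) auto

lemma fixed_lip_width_le_add: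
  assumes K: "bounded K" "K \<noteq> {}" and N: "is_norm_on k N" and "0 \<le> \<gamma>" "\<gamma> \<le> \<gamma>'"
  shows "fixed_lip_width K k N \<gamma> \<le> fixed_lip_width K k N \<gamma>' + (\<gamma>' - \<gamma>)"
proof (cases "\<gamma> = \<gamma>'")
  case False
  define t where "t = \<gamma> / \<gamma>'"
  have t: "0 \<le> t" "t \<le> 1" "t * \<gamma>' = \<gamma>"
    using assms(4,5) False by (auto simp: t_def)
  have "fixed_lip_width K k N \<gamma> - (\<gamma>' - \<gamma>) \<le> approx_error K (unit_ball k N) \<Phi>"
    if \<Phi>: "\<Phi> \<in> lip_maps k N \<gamma>'" for \<Phi>
  proof -
    define \<Psi> where "\<Psi> = (\<lambda>y. \<Phi> (\<lambda>i. t * y i))"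
    have "\<Psi> \<in> lip_maps k N \<gamma>"
      using lip_maps_rescale[OF N \<Phi>, of t] t by (simp add: \<Psi>_def)
    then have "fixed_lip_width K k N \<gamma> \<le> approx_error K (unit_ball k N) \<Psi>"
      unfolding fixed_lip_width_eq_INF_approx_error
      by (rule cINF_lower[OF bdd_below_approx_error[OF K N]])
    also have "\<dots> \<le> approx_error K (unit_ball k N) \<Phi> + (\<gamma>' - \<gamma>)"
    proof (rule approx_error_le[OF K])
      show "unit_ball k N \<noteq> {}" by (rule unit_ball_not_empty[OF N])
      fix y assume y: "y \<in> unit_ball k N"
      then have "y \<in> Rk k" "N y \<le> 1" by (auto simp: unit_ball_def)
      have "norm (\<Psi> y - \<Phi> y) \<le> \<gamma>' * N (\<lambda>i. t * y i - y i)"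
        using \<Phi> scale_in_unit_ball[OF N y, of t] y t by (simp add: lip_maps_def \<Psi>_def)
      also have "(\<lambda>i. t * y i - y i) = (\<lambda>i. (t - 1) * y i)"
        by (simp add: left_diff_distrib)
      also have "\<gamma>' * N \<dots> = \<gamma>' * (1 - t) * N y"
        using t by (simp add: is_norm_on_scale[OF N \<open>y \<in> Rk k\<close>])
      also have "\<dots> \<le> \<gamma>' * (1 - t)"
        using \<open>N y \<le> 1\<close> t assms(4,5) by (simp add: mult_left_le)
      also have "\<dots> = \<gamma>' - \<gamma>"
        using t by (simp add: algebra_simps)
      finally show "\<exists>y'\<in>unit_ball k N. norm (\<Psi> y' - \<Phi> y) \<le> \<gamma>' - \<gamma>"
        using y by blast
    qed
    finally show ?thesis by simp
  qed
  then have "fixed_lip_width K k N \<gamma> - (\<gamma>' - \<gamma>) \<le> fixed_lip_width K k N \<gamma>'"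
    unfolding fixed_lip_width_eq_INF_approx_error[of K k N \<gamma>']
    using const_in_lip_maps[OF N, of \<gamma>'] assms(4,5) by (intro cINF_greatest) auto
  then show ?thesis by simp
qed simp

lemma lipschitz_on_fixed_lip_width:
  assumes "bounded K" "K \<noteq> {}" "is_norm_on k N"
  shows "1-lipschitz_on {0..} (fixed_lip_width K k N)"
proof (rule lipschitz_on_leI)
  fix \<gamma> \<gamma>' :: real assume "\<gamma> \<in> {0..}" "\<gamma>' \<in> {0..}" "\<gamma> \<le> \<gamma>'"
  then show "dist (fixed_lip_width K k N \<gamma>) (fixed_lip_width K k N \<gamma>') \<le> 1 * dist \<gamma> \<gamma>'"
    using fixed_lip_width_antimono[OF assms, of \<gamma> \<gamma>'] fixed_lip_width_le_add[OF assms, of \<gamma> \<gamma>']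
    by (simp add: dist_real_def)
qed simp

lemma lipschitz_on_INF:
  fixes f :: "'i \<Rightarrow> 'a::metric_space \<Rightarrow> real"
  assumes "0 \<le> L" and lip: "\<And>i. i \<in> I \<Longrightarrow> L-lipschitz_on X (f i)"
    and bdd: "\<And>x. x \<in> X \<Longrightarrow> bdd_below ((\<lambda>i. f i x) ` I)"
  shows "L-lipschitz_on X (\<lambda>x. INF i\<in>I. f i x)"
proof (rule lipschitz_onI[OF _ \<open>0 \<le> L\<close>])
  have le: "(INF i\<in>I. f i x) \<le> (INF i\<in>I. f i y) + L * dist x y" if "x \<in> X" "y \<in> X" for x y
  proof (cases "I = {}")
    case False
    have "(INF i\<in>I. f i x) - L * dist x y \<le> (INF i\<in>I. f i y)"
    proof (rule cINF_greatest[OF False])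
      fix i assume i: "i \<in> I"
      have "(INF i\<in>I. f i x) \<le> f i x" by (rule cINF_lower[OF bdd[OF that(1)] i])
      also have "\<dots> \<le> f i y + L * dist x y"
        using lipschitz_onD[OF lip[OF i] that] by (simp add: dist_real_def)
      finally show "(INF i\<in>I. f i x) - L * dist x y \<le> f i y" by simp
    qed
    then show ?thesis by simp
  qed (simp add: \<open>0 \<le> L\<close>)
  fix x y assume "x \<in> X" "y \<in> X"
  then show "dist (INF i\<in>I. f i x) (INF i\<in>I. f i y) \<le> L * dist x y"
    using le[of x y] le[of y x] by (simp add: dist_real_def dist_commute)
qed

lemma fixed_lip_width_empty: "is_norm_on k N \<Longrightarrow> 0 \<le> \<gamma> \<Longrightarrow> fixed_lip_width {} k N \<gamma> = Sup {}"
  using const_in_lip_maps by (fastforce simp: fixed_lip_width_def intro: cINF_const)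

lemma lip_width_empty: "0 \<le> \<gamma> \<Longrightarrow> lip_width n {} \<gamma> = lip_width n {} 0"
  unfolding lip_width_def by (intro INF_cong refl) (simp add: fixed_lip_width_empty)

lemma lipschitz_on_lip_width:
  assumes "bounded K"
  shows "1-lipschitz_on {0..} (lip_width n K)"
proof (cases "K = {}")
  case True
  have "1-lipschitz_on {0..} (\<lambda>_. lip_width n K 0)"
    by (rule lipschitz_on_le[OF lipschitz_on_constant]) simp
  then show ?thesis
    by (rule lipschitz_on_transform) (simp add: True lip_width_empty)
next
  case False
  have inner: "1-lipschitz_on {0..} (\<lambda>\<gamma>. INF N\<in>{N. is_norm_on k N}. fixed_lip_width K k N \<gamma>)"
    for k
    using fixed_lip_width_nonneg[OF assms False]
    by (intro lipschitz_on_INF lipschitz_on_fixed_lip_width[OF assms False] bdd_belowI[of _ 0])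
      auto
  have "0 \<le> (INF N\<in>{N. is_norm_on k N}. fixed_lip_width K k N \<gamma>)" if "0 \<le> \<gamma>" for k \<gamma>
    using ex_is_norm_on fixed_lip_width_nonneg[OF assms False _ that]
    by (intro cINF_greatest) auto
  then show ?thesis
    unfolding lip_width_def[abs_def]
    by (intro lipschitz_on_INF inner bdd_belowI[of _ 0]) auto
qed

theorem theorem2p5:
  fixes K :: "'a::banach set" and n :: nat
  assumes "compact K" and "n \<ge> 1"
  shows "continuous_on {0..} (\<lambda>\<gamma>. lip_width n K \<gamma>)"
  by (rule lipschitz_on_continuous_on[OF lipschitz_on_lip_width[OF compact_imp_bounded[OF assms(1)]]])

end
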